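(* Let $\phi\colon A\to K[\tau]$ be a Drinfeld $A$-module over a finitely generated field $K$ over $\mathbb{F}_p$, let $t\in A$ be non-constant, and for an integer $d$ let $M_d$ be the $\mathbb{F}_p[t]$-submodule of $\mathrm{End}_{K^{\mathrm{sep}}}(\phi)$ generated by all $u\in\mathrm{End}_{K^{\mathrm{sep}}}(\phi)$ with $\deg_\tau(u)\le d$. If $M_d$ has finite index in $\mathrm{End}_{K^{\mathrm{sep}}}(\phi)$ (i.e. has the same $\mathbb{F}_p[t]$-rank), then $M_d=\mathrm{End}_{K^{\mathrm{sep}}}(\phi)$.
   Context: $A$ is an admissible coefficient ring; $K[\tau]$ is the twisted polynomial ring with $\tau x=x^p\tau$; a Drinfeld $A$-module is a ring homomorphism $\phi\colon A\to K[\tau]$ with image not in $K$; $\mathrm{End}_{K^{\mathrm{sep}}}(\phi)$ is the centralizer of $\phi(A)$ in $K^{\mathrm{sep}}[\tau]$. $K^{\mathrm{sep}}[\tau]$ is regarded as an $\mathbb{F}_p[t]$-module via $(a,u)\mapsto\phi_au$. *)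

theory Defs
  imports "HOL-Computational_Algebra.Computational_Algebra"
begin

inductive_set ring_gen :: "'a::comm_ring_1 set \<Rightarrow> 'a set" for S where
  rg_base: "x \<in> S \<Longrightarrow> x \<in> ring_gen S"
| rg_zero: "0 \<in> ring_gen S"
| rg_one: "1 \<in> ring_gen S"
| rg_add: "x \<in> ring_gen S \<Longrightarrow> y \<in> ring_gen S \<Longrightarrow> x + y \<in> ring_gen S"
| rg_uminus: "x \<in> ring_gen S \<Longrightarrow> - x \<in> ring_gen S"
| rg_mult: "x \<in> ring_gen S \<Longrightarrow> y \<in> ring_gen S \<Longrightarrow> x * y \<in> ring_gen S"

inductive_set field_gen :: "'a::field set \<Rightarrow> 'a set" for S where
  fg_base: "x \<in> S \<Longrightarrow> x \<in> field_gen S"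
| fg_zero: "0 \<in> field_gen S"
| fg_one: "1 \<in> field_gen S"
| fg_add: "x \<in> field_gen S \<Longrightarrow> y \<in> field_gen S \<Longrightarrow> x + y \<in> field_gen S"
| fg_uminus: "x \<in> field_gen S \<Longrightarrow> - x \<in> field_gen S"
| fg_mult: "x \<in> field_gen S \<Longrightarrow> y \<in> field_gen S \<Longrightarrow> x * y \<in> field_gen S"
| fg_inverse: "x \<in> field_gen S \<Longrightarrow> inverse x \<in> field_gen S"

text \<open>K is a finitely generated field over F_p (inside the ambient field 'L of char p):
  it is the subfield generated by a finite set (the prime field is contained automatically).\<close>
definition fin_gen_field :: "'a::field set \<Rightarrow> bool" where
  "fin_gen_field K \<longleftrightarrow> (\<exists>S. finite S \<and> K = field_gen S)"

definition is_ideal :: "'a::comm_ring_1 set \<Rightarrow> bool" where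
  "is_ideal I \<longleftrightarrow> 0 \<in> I \<and> (\<forall>x\<in>I. \<forall>y\<in>I. x + y \<in> I) \<and> (\<forall>x\<in>I. \<forall>a. a * x \<in> I)"

definition prime_ideal :: "'a::comm_ring_1 set \<Rightarrow> bool" where
  "prime_ideal P \<longleftrightarrow> is_ideal P \<and> P \<noteq> UNIV \<and> (\<forall>a b. a * b \<in> P \<longrightarrow> a \<in> P \<or> b \<in> P)"

definition maximal_ideal :: "'a::comm_ring_1 set \<Rightarrow> bool" where
  "maximal_ideal M \<longleftrightarrow> is_ideal M \<and> M \<noteq> UNIV \<and>
     (\<forall>J. is_ideal J \<and> M \<subseteq> J \<longrightarrow> J = M \<or> J = UNIV)"

text \<open>Integrally closed: if x/y (y \<noteq> 0) satisfies a monic polynomial f of degree n over A,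
  i.e. the homogenised relation holds, then y divides x.\<close>
definition integrally_closed :: "'a::idom itself \<Rightarrow> bool" where
  "integrally_closed _ \<longleftrightarrow> (\<forall>(f::'a poly) (x::'a) y. y \<noteq> 0 \<longrightarrow> lead_coeff f = 1 \<longrightarrow>
      (\<Sum>i\<le>degree f. coeff f i * x ^ i * y ^ (degree f - i)) = 0 \<longrightarrow> y dvd x)"

text \<open>Admissible coefficient ring: the ring of elements of a global function field over F_p
  regular away from one fixed place \<infinity>.  Equivalently (used here): a Dedekind domain of
  characteristic p that is finitely generated as a ring (i.e. as F_p-algebra), is not a field,
  and has a finite unit group (exactly one place at infinity).\<close>
definition admissible_coeff_ring :: "'a::idom itself \<Rightarrow> nat \<Rightarrow> bool" where
  "admissible_coeff_ring T p \<longleftrightarrow>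
     prime p \<and> CHAR('a) = p \<and>
     (\<exists>S::'a set. finite S \<and> ring_gen S = UNIV) \<and>
     (\<exists>a::'a. a \<noteq> 0 \<and> \<not> a dvd 1) \<and>
     (\<forall>P::'a set. prime_ideal P \<and> P \<noteq> {0} \<longrightarrow> maximal_ideal P) \<and>
     integrally_closed T \<and>
     finite {u::'a. u dvd 1}"

text \<open>Constant elements of A: those algebraic over the prime field F_p.\<close>
definition constant_elem :: "'a::comm_ring_1 \<Rightarrow> bool" where
  "constant_elem a \<longleftrightarrow> (\<exists>f::nat poly. (\<exists>i. \<not> CHAR('a) dvd coeff f i) \<and>
       poly (map_poly of_nat f) a = (0::'a))"

section \<open>Twisted polynomials K[\<tau>], \<tau> x = x^p \<tau>, represented as 'L poly (coefficient of \<tau>^i)\<close>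

definition tmult :: "'L::field poly \<Rightarrow> 'L poly \<Rightarrow> 'L poly" where
  "tmult f g = (\<Sum>i\<le>degree f. \<Sum>j\<le>degree g.
       monom (coeff f i * coeff g j ^ (CHAR('L) ^ i)) (i + j))"

definition twisted_over :: "'L::field set \<Rightarrow> 'L poly set" where
  "twisted_over K = {u. \<forall>i. coeff u i \<in> K}"

definition alg_closed :: "'L::field itself \<Rightarrow> bool" where
  "alg_closed _ \<longleftrightarrow> (\<forall>f::'L poly. degree f > 0 \<longrightarrow> (\<exists>x. poly f x = 0))"

definition sep_closure :: "'L::field set \<Rightarrow> 'L set" where
  "sep_closure K = {x. \<exists>f. f \<noteq> 0 \<and> (\<forall>i. coeff f i \<in> K) \<and> coprime f (pderiv f) \<and> poly f x = 0}"

definition drinfeld_module :: "'L::field set \<Rightarrow> ('a::comm_ring_1 \<Rightarrow> 'L poly) \<Rightarrow> bool" where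
  "drinfeld_module K \<phi> \<longleftrightarrow>
     (\<forall>a. \<phi> a \<in> twisted_over K) \<and>
     \<phi> 1 = 1 \<and> (\<forall>a b. \<phi> (a + b) = \<phi> a + \<phi> b) \<and> (\<forall>a b. \<phi> (a * b) = tmult (\<phi> a) (\<phi> b)) \<and>
     (\<exists>a. degree (\<phi> a) > 0)"

definition End_sep :: "'L::field set \<Rightarrow> ('a \<Rightarrow> 'L poly) \<Rightarrow> 'L poly set" where
  "End_sep K \<phi> = {u \<in> twisted_over (sep_closure K). \<forall>a. tmult u (\<phi> a) = tmult (\<phi> a) u}"

text \<open>F_p[t]-submodule of K^sep[\<tau>] (action (a,u) \<mapsto> \<phi>_a u) generated by a set G.\<close>
inductive_set Fpt_span :: "('a::comm_ring_1 \<Rightarrow> 'L::field poly) \<Rightarrow> 'a \<Rightarrow> 'L poly set \<Rightarrow> 'L poly set"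
  for \<phi> t G where
  sp_zero: "0 \<in> Fpt_span \<phi> t G"
| sp_base: "u \<in> G \<Longrightarrow> u \<in> Fpt_span \<phi> t G"
| sp_add: "u \<in> Fpt_span \<phi> t G \<Longrightarrow> v \<in> Fpt_span \<phi> t G \<Longrightarrow> u + v \<in> Fpt_span \<phi> t G"
| sp_smult: "a \<in> ring_gen {t} \<Longrightarrow> u \<in> Fpt_span \<phi> t G \<Longrightarrow> tmult (\<phi> a) u \<in> Fpt_span \<phi> t G"

definition M_deg :: "'L::field set \<Rightarrow> ('a::comm_ring_1 \<Rightarrow> 'L poly) \<Rightarrow> 'a \<Rightarrow> int \<Rightarrow> 'L poly set" where
  "M_deg K \<phi> t d = Fpt_span \<phi> t {u \<in> End_sep K \<phi>. int (degree u) \<le> d}"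

definition finite_index :: "'b::ab_group_add set \<Rightarrow> 'b set \<Rightarrow> bool" where
  "finite_index M E \<longleftrightarrow> finite ((\<lambda>x. (\<lambda>m. x + m) ` M) ` E)"

end

theory Submission
  imports Defs
begin

text \<open>
  An element \<open>u\<close> of \<open>End_sep K \<phi>\<close> of least degree outside \<open>M\<^sub>d\<close> has degree \<open>> d\<close>.
  If its leading monomial were that of some \<open>\<phi>\<^bsub>t\<^sup>j\<^esub> v\<close> with \<open>v \<in> End_sep K \<phi>\<close> of degree
  \<open>\<le> d\<close>, subtracting \<open>\<phi>\<^bsub>t\<^sup>j\<^esub> v \<in> M\<^sub>d\<close> would lower the degree. Otherwise consider
  \<open>\<phi>\<^bsub>t\<^sup>j\<^esub> u - \<phi>\<^bsub>t\<^sup>i\<^esub> u\<close> for \<open>i < j\<close>: its leading monomial is that of \<open>\<phi>\<^bsub>t\<^sup>j\<^esub> u\<close>,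
  whereas every nonzero element \<open>\<Sum>\<^sub>k \<phi>\<^bsub>t\<^sup>k\<^esub> w\<^sub>k\<close> of \<open>M\<^sub>d\<close> has the leading monomial of a
  single \<open>\<phi>\<^bsub>t\<^sup>k\<^esub> w\<close> (merge terms of equal degree), and cancelling \<open>\<phi>\<^bsub>t\<^sup>j\<^esub>\<close> would
  match \<open>u\<close> after all. So the \<open>\<phi>\<^bsub>t\<^sup>j\<^esub> u\<close> lie in infinitely many cosets of \<open>M\<^sub>d\<close>.

  That \<open>End_sep K \<phi>\<close> is a ring at all rests on the fact that the coefficients of anything
  commuting with a \<open>\<phi>\<^sub>b\<close> of positive degree are roots of separable additive polynomials over
  \<open>K\<close>, and such roots are closed under addition thanks to common left multiples in \<open>K[\<tau>]\<close>.
\<close>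

section \<open>Leading monomials\<close>

definition lead_monom :: "'a::zero poly \<Rightarrow> 'a poly" where
  "lead_monom f = monom (lead_coeff f) (degree f)"

lemma lead_monom_0 [simp]: "lead_monom 0 = 0"
  by (simp add: lead_monom_def)

lemma lead_monom_eq_0_iff [simp]: "lead_monom f = 0 \<longleftrightarrow> f = 0"
  by (simp add: lead_monom_def)

lemma lead_monom_monom [simp]: "lead_monom (monom c n) = monom c n"
  by (cases "c = 0") (simp_all add: lead_monom_def degree_monom_eq)

lemma lead_monom_eq_iff:
  "f \<noteq> 0 \<Longrightarrow> lead_monom f = lead_monom g \<longleftrightarrow> degree f = degree g \<and> lead_coeff f = lead_coeff g"
  by (auto simp: lead_monom_def monom_eq_iff' dest: arg_cong[of _ _ degree])

lemma degree_diff_less_lead_monom: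
  fixes f g :: "'a::ab_group_add poly"
  assumes "lead_monom f = lead_monom g" "f \<noteq> g"
  shows "degree (f - g) < degree f"
proof -
  have "f \<noteq> 0" using assms by auto
  then have eq: "degree g = degree f" "lead_coeff g = lead_coeff f"
    using assms(1) lead_monom_eq_iff by metis+
  have "degree (f - g) \<le> degree f"
    using degree_diff_le[of f "degree f" g] eq by simp
  moreover have "coeff (f - g) (degree f) = 0"
    using eq by simp
  ultimately show ?thesis
    using assms(2) by (metis eq_iff_diff_eq_0 le_neq_implies_less leading_coeff_0_iff)
qed

lemma degree_diff_eq_left: "degree q < degree p \<Longrightarrow> degree (p - q) = degree p"
  for p q :: "'a::ab_group_add poly"
  using degree_add_eq_left[of "- q" p] by simp

lemma lead_monom_diff_eq_left: "degree q < degree p \<Longrightarrow> lead_monom (p - q) = lead_monom p"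
  for p q :: "'a::ab_group_add poly"
  by (simp add: lead_monom_def degree_diff_eq_left coeff_eq_0)

lemma lead_monom_sum_eq:
  fixes f :: "'b \<Rightarrow> 'a::ab_group_add poly"
  assumes "finite S" "i \<in> S" "\<And>j. j \<in> S \<Longrightarrow> j \<noteq> i \<Longrightarrow> degree (f j) < degree (f i)"
  shows "lead_monom (sum f S) = lead_monom (f i)"
proof -
  have "sum f S = f i + sum f (S - {i})"
    using assms(1,2) by (rule sum.remove)
  moreover have "sum f (S - {i}) = 0 \<or> degree (sum f (S - {i})) < degree (f i)"
  proof (cases "degree (f i) = 0")
    case True
    then have "S - {i} = {}"
      using assms(3) by auto
    then show ?thesis
      by (metis sum.empty)
  qed (use assms(3) in \<open>auto intro!: degree_sum_less\<close>)
  ultimately show ?thesis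
    by (auto simp: lead_monom_def degree_add_eq_left coeff_eq_0)
qed

lemma lead_monom_sum_inj_degree:
  fixes f :: "'b \<Rightarrow> 'a::ab_group_add poly"
  assumes "finite S" "S \<noteq> {}" "inj_on (\<lambda>j. degree (f j)) S"
  obtains i where "i \<in> S" "lead_monom (sum f S) = lead_monom (f i)"
proof -
  have "Max ((\<lambda>j. degree (f j)) ` S) \<in> (\<lambda>j. degree (f j)) ` S"
    using assms(1,2) by (intro Max_in) auto
  then obtain i where i: "i \<in> S" "Max ((\<lambda>j. degree (f j)) ` S) = degree (f i)"
    by blast
  have "degree (f j) < degree (f i)" if "j \<in> S" "j \<noteq> i" for j
  proof -
    have "degree (f j) \<le> degree (f i)"
      using that(1) i(2) assms(1) by (metis Max_ge finite_imageI image_eqI)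
    moreover have "degree (f j) \<noteq> degree (f i)"
      using that i(1) assms(3) by (meson inj_on_contraD)
    ultimately show ?thesis
      by simp
  qed
  then show ?thesis
    using that i(1) lead_monom_sum_eq[OF assms(1) i(1)] by blast
qed

section \<open>The twisted polynomial ring\<close>

definition teval :: "'L::field poly \<Rightarrow> 'L \<Rightarrow> 'L" where
  "teval f x = (\<Sum>i\<le>degree f. coeff f i * x ^ (CHAR('L) ^ i))"

lemma teval_eq_sum: "degree f \<le> N \<Longrightarrow> teval f x = (\<Sum>i\<le>N. coeff f i * x ^ (CHAR('L) ^ i))"
  for f :: "'L::field poly"
  unfolding teval_def by (rule sum.mono_neutral_left) (auto simp: coeff_eq_0)

lemma teval_add: "teval (f + g) x = teval f x + teval g x"
  for f g :: "'L::field poly"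
proof -
  define N where "N = max (degree f) (degree g)"
  have "degree (f + g) \<le> N" "degree f \<le> N" "degree g \<le> N"
    by (auto simp: N_def degree_add_le)
  then show ?thesis
    by (simp add: teval_eq_sum[of _ N] algebra_simps sum.distrib)
qed

lemma teval_minus: "teval (- f) x = - teval f x"
  for f :: "'L::field poly"
  by (simp add: teval_def sum_negf)

lemma teval_diff: "teval (f - g) x = teval f x - teval g x"
  for f g :: "'L::field poly"
  using teval_add[of f "- g" x] by (simp add: teval_minus)

lemma teval_const: "teval [:c:] x = c * x"
  for c :: "'L::field"
  by (simp add: teval_def)

lemma teval_monom: "teval (monom c n) x = c * x ^ (CHAR('L) ^ n)"
  for c :: "'L::field"
proof -
  have "teval (monom c n) x = (\<Sum>i\<le>n. if i = n then c * x ^ (CHAR('L) ^ n) else 0)"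
    unfolding teval_eq_sum[OF degree_monom_le] by (rule sum.cong) (auto simp: coeff_monom)
  then show ?thesis
    by simp
qed

lemma sum_sum_if_add_eq:
  fixes F :: "nat \<Rightarrow> nat \<Rightarrow> 'b::comm_monoid_add"
  assumes "\<And>i j. i > a \<Longrightarrow> F i j = 0" "\<And>i j. j > b \<Longrightarrow> F i j = 0"
  shows "(\<Sum>i\<le>a. \<Sum>j\<le>b. if i + j = n then F i j else 0) = (\<Sum>i\<le>n. F i (n - i))"
proof -
  have "(\<Sum>j\<le>b. if i + j = n then F i j else 0) = (if i \<le> n then F i (n - i) else 0)" for i
  proof (cases "i \<le> n \<and> n - i \<le> b")
    case True
    have "(\<Sum>j\<le>b. if i + j = n then F i j else 0) = (\<Sum>j\<le>b. if j = n - i then F i j else 0)"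
      by (rule sum.cong) (use True in auto)
    then show ?thesis using True by (simp add: sum.delta)
  next
    case False
    then show ?thesis using assms(2) by (auto intro!: sum.neutral)
  qed
  then have "(\<Sum>i\<le>a. \<Sum>j\<le>b. if i + j = n then F i j else 0) = (\<Sum>i\<le>a. if i \<le> n then F i (n - i) else 0)"
    by simp
  also have "\<dots> = (\<Sum>i\<le>max a n. if i \<le> n then F i (n - i) else 0)"
    by (rule sum.mono_neutral_left) (auto simp: assms(1))
  also have "\<dots> = (\<Sum>i\<le>n. F i (n - i))"
    by (subst sum.mono_neutral_right[of "{..max a n}" "{..n}"]) auto
  finally show ?thesis .
qed

locale prime_char =
  fixes char_type :: "'L::field itself"
  assumes prime_char: "prime CHAR('L)"
begin

lemma CHAR_pos [simp]: "CHAR('L) > 0"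
  using prime_char prime_gt_0_nat by blast

lemma CHAR_power_pos: "CHAR('L) ^ i > 0"
  using CHAR_pos by simp

lemma frobenius_add: "(x + y) ^ (CHAR('L) ^ i) = x ^ (CHAR('L) ^ i) + y ^ (CHAR('L) ^ i)"
  for x y :: 'L
  by (rule freshmans_dream'[OF prime_char refl])

lemma frobenius_sum: "(sum f A) ^ (CHAR('L) ^ i) = (\<Sum>x\<in>A. f x ^ (CHAR('L) ^ i))"
  for f :: "'b \<Rightarrow> 'L"
  by (rule freshmans_dream_sum'[OF prime_char refl])

lemma frobenius_zero [simp]: "(0::'L) ^ (CHAR('L) ^ i) = 0"
  by simp

lemma frobenius_eq_0_iff [simp]: "x ^ (CHAR('L) ^ i) = 0 \<longleftrightarrow> x = 0"
  for x :: 'L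
  using CHAR_power_pos[of i] by simp

lemma frobenius_minus: "(- x) ^ (CHAR('L) ^ i) = - (x ^ (CHAR('L) ^ i))"
  for x :: 'L
proof -
  have "x ^ (CHAR('L) ^ i) + (- x) ^ (CHAR('L) ^ i) = 0"
    using frobenius_add[of x "- x" i] by simp
  then show ?thesis
    by (simp add: eq_neg_iff_add_eq_0 add.commute)
qed

lemma coeff_tmult: "coeff (tmult f g) n = (\<Sum>i\<le>n. coeff f i * coeff g (n - i) ^ (CHAR('L) ^ i))"
  for f g :: "'L poly"
proof -
  have "coeff (tmult f g) n = (\<Sum>i\<le>degree f. \<Sum>j\<le>degree g.
       if i + j = n then coeff f i * coeff g j ^ (CHAR('L) ^ i) else 0)"
    by (simp add: tmult_def coeff_sum coeff_monom eq_commute)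
  also have "\<dots> = (\<Sum>i\<le>n. coeff f i * coeff g (n - i) ^ (CHAR('L) ^ i))"
    by (rule sum_sum_if_add_eq) (auto simp: coeff_eq_0 CHAR_pos)
  finally show ?thesis .
qed

lemma coeff_0_tmult: "coeff (tmult f g) 0 = coeff f 0 * coeff g 0"
  for f g :: "'L poly"
  by (simp add: coeff_tmult)

lemma tmult_0_left [simp]: "tmult 0 g = 0"
  for g :: "'L poly"
  by (rule poly_eqI) (simp add: coeff_tmult)

lemma tmult_0_right [simp]: "tmult f 0 = 0"
  for f :: "'L poly"
  by (rule poly_eqI) (simp add: coeff_tmult)

lemma tmult_monom_monom: "tmult (monom a i) (monom b j) = monom (a * b ^ (CHAR('L) ^ i)) (i + j)"
  for a b :: 'L
proof (rule poly_eqI)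
  fix n
  have "coeff (tmult (monom a i) (monom b j)) n =
      (\<Sum>k\<le>n. if k = i then (if n - i = j then a * b ^ (CHAR('L) ^ i) else 0) else 0)"
    unfolding coeff_tmult by (rule sum.cong) (auto simp: coeff_monom)
  then show "coeff (tmult (monom a i) (monom b j)) n = coeff (monom (a * b ^ (CHAR('L) ^ i)) (i + j)) n"
    by (auto simp: coeff_monom)
qed

lemma tmult_const_left: "tmult [:c:] g = smult c g"
  for c :: 'L
proof (rule poly_eqI)
  fix n
  have "coeff (tmult [:c:] g) n = (\<Sum>i\<le>n. if i = 0 then c * coeff g n else 0)"
    unfolding coeff_tmult by (rule sum.cong) (auto simp: coeff_pCons split: nat.split)
  then show "coeff (tmult [:c:] g) n = coeff (smult c g) n" by simp
qed

lemma tmult_1_left [simp]: "tmult 1 g = g"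
  for g :: "'L poly"
  using tmult_const_left[of 1 g] by (simp add: one_pCons)

lemma tmult_1_right [simp]: "tmult f 1 = f"
  for f :: "'L poly"
proof (rule poly_eqI)
  fix n
  have "coeff (tmult f 1) n = (\<Sum>i\<le>n. if i = n then coeff f n else 0)"
    unfolding coeff_tmult by (rule sum.cong) auto
  then show "coeff (tmult f 1) n = coeff f n" by simp
qed

lemma tmult_add_left: "tmult (f + g) h = tmult f h + tmult g h"
  for f g h :: "'L poly"
  by (rule poly_eqI) (simp add: coeff_tmult algebra_simps sum.distrib)

lemma tmult_add_right: "tmult f (g + h) = tmult f g + tmult f h"
  for f g h :: "'L poly"
  by (rule poly_eqI) (simp add: coeff_tmult algebra_simps sum.distrib frobenius_add)

lemma tmult_minus_left: "tmult (- f) h = - tmult f h"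
  for f h :: "'L poly"
  by (rule poly_eqI) (simp add: coeff_tmult sum_negf)

lemma tmult_minus_right: "tmult f (- h) = - tmult f h"
  for f h :: "'L poly"
  by (rule poly_eqI) (simp add: coeff_tmult sum_negf frobenius_minus)

lemma tmult_diff_left: "tmult (f - g) h = tmult f h - tmult g h"
  for f g h :: "'L poly"
  using tmult_add_left[of f "- g" h] by (simp add: tmult_minus_left)

lemma tmult_diff_right: "tmult f (g - h) = tmult f g - tmult f h"
  for f g h :: "'L poly"
  using tmult_add_right[of f g "- h"] by (simp add: tmult_minus_right)

lemma tmult_sum_right: "tmult f (sum g A) = (\<Sum>x\<in>A. tmult f (g x))"
  for f :: "'L poly"
  by (induction A rule: infinite_finite_induct) (auto simp: tmult_add_right)

lemma tmult_assoc: "tmult (tmult f g) h = tmult f (tmult g h)"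
  for f g h :: "'L poly"
proof (rule poly_eqI)
  fix n
  define P where "P = (\<lambda>i. CHAR('L) ^ i)"
  define X where "X = (\<lambda>a b. coeff f a * coeff g b ^ P a * coeff h (n - a - b) ^ P (a + b))"
  have "coeff (tmult (tmult f g) h) n =
      (\<Sum>k\<le>n. \<Sum>a\<le>k. coeff f a * coeff g (k - a) ^ P a * coeff h (n - k) ^ P k)"
    by (simp add: coeff_tmult P_def sum_distrib_right)
  also have "\<dots> = (\<Sum>k\<le>n. \<Sum>a\<le>k. X a (k - a))"
    by (intro sum.cong refl) (auto simp: X_def)
  also have "\<dots> = (\<Sum>(a, b)\<in>{(i, j). i + j \<le> n}. X a b)"
    by (rule sum.triangle_reindex_eq[symmetric])
  also have "{(i, j). i + j \<le> n} = Sigma {..n} (\<lambda>a. {..n - a})"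
    by auto
  also have "(\<Sum>(a, b)\<in>Sigma {..n} (\<lambda>a. {..n - a}). X a b) = (\<Sum>a\<le>n. \<Sum>b\<le>n - a. X a b)"
    by (rule sum.Sigma[symmetric]) auto
  also have "\<dots> = (\<Sum>a\<le>n. coeff f a * (\<Sum>b\<le>n - a. coeff g b * coeff h (n - a - b) ^ P b) ^ P a)"
  proof (rule sum.cong[OF refl])
    fix a
    have "(coeff g b * coeff h (n - a - b) ^ P b) ^ P a = coeff g b ^ P a * coeff h (n - a - b) ^ P (a + b)" for b
      by (simp add: P_def power_mult_distrib power_add mult.commute flip: power_mult)
    then show "(\<Sum>b\<le>n - a. X a b) = coeff f a * (\<Sum>b\<le>n - a. coeff g b * coeff h (n - a - b) ^ P b) ^ P a"
      unfolding P_def frobenius_sum by (simp add: X_def P_def sum_distrib_left mult.assoc)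
  qed
  also have "\<dots> = coeff (tmult f (tmult g h)) n"
    by (simp add: coeff_tmult P_def)
  finally show "coeff (tmult (tmult f g) h) n = coeff (tmult f (tmult g h)) n" .
qed

lemma coeff_tmult_eq_0:
  fixes f g :: "'L poly"
  assumes "degree f + degree g < n"
  shows "coeff (tmult f g) n = 0"
  unfolding coeff_tmult
proof (intro sum.neutral ballI)
  fix i assume "i \<in> {..n}"
  then have "degree f < i \<or> degree g < n - i"
    using assms by auto
  then show "coeff f i * coeff g (n - i) ^ CHAR('L) ^ i = 0"
    by (auto simp: coeff_eq_0)
qed

lemma coeff_tmult_degree_add:
  "coeff (tmult f g) (degree f + degree g) = lead_coeff f * lead_coeff g ^ (CHAR('L) ^ degree f)"
  for f g :: "'L poly"
proof -
  let ?n = "degree f + degree g"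
  have "(\<Sum>i\<in>{..?n} - {degree f}. coeff f i * coeff g (?n - i) ^ CHAR('L) ^ i) = 0"
  proof (intro sum.neutral ballI)
    fix i assume "i \<in> {..?n} - {degree f}"
    then have "degree f < i \<or> degree g < ?n - i"
      by auto
    then show "coeff f i * coeff g (?n - i) ^ CHAR('L) ^ i = 0"
      by (auto simp: coeff_eq_0)
  qed
  then show ?thesis
    unfolding coeff_tmult by (subst sum.remove[of _ "degree f"]) auto
qed

lemma degree_tmult_le: "degree (tmult f g) \<le> degree f + degree g"
  for f g :: "'L poly"
  by (rule degree_le) (auto simp: coeff_tmult_eq_0)

lemma degree_tmult: "f \<noteq> 0 \<Longrightarrow> g \<noteq> 0 \<Longrightarrow> degree (tmult f g) = degree f + degree g"
  for f g :: "'L poly"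
  by (intro antisym degree_tmult_le le_degree) (simp add: coeff_tmult_degree_add)

lemma lead_coeff_tmult:
  "f \<noteq> 0 \<Longrightarrow> g \<noteq> 0 \<Longrightarrow> lead_coeff (tmult f g) = lead_coeff f * lead_coeff g ^ (CHAR('L) ^ degree f)"
  for f g :: "'L poly"
  by (simp add: degree_tmult coeff_tmult_degree_add)

lemma tmult_eq_0_iff [simp]: "tmult f g = 0 \<longleftrightarrow> f = 0 \<or> g = 0"
  for f g :: "'L poly"
proof
  assume "tmult f g = 0"
  show "f = 0 \<or> g = 0"
  proof (rule ccontr)
    assume "\<not> (f = 0 \<or> g = 0)"
    then have "lead_coeff (tmult f g) \<noteq> 0"
      by (simp add: lead_coeff_tmult)
    with \<open>tmult f g = 0\<close> show False
      by simp
  qed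
qed auto

lemma tmult_right_cancel: "g \<noteq> 0 \<Longrightarrow> tmult f g = tmult h g \<longleftrightarrow> f = h"
  for f g h :: "'L poly"
  using tmult_diff_left[of f h g] by auto

lemma tmult_left_cancel: "f \<noteq> 0 \<Longrightarrow> tmult f g = tmult f h \<longleftrightarrow> g = h"
  for f g h :: "'L poly"
  using tmult_diff_right[of f g h] by auto

lemma lead_monom_tmult: "lead_monom (tmult f g) = tmult (lead_monom f) (lead_monom g)"
  for f g :: "'L poly"
  by (cases "f = 0 \<or> g = 0")
    (auto simp: lead_monom_def tmult_monom_monom degree_tmult coeff_tmult_degree_add)

lemma lead_monom_tmult_quotient:
  fixes f g :: "'L poly"
  assumes "g \<noteq> 0" "degree g \<le> degree f"
  shows "lead_monom (tmult (monom (lead_coeff f / lead_coeff g ^ (CHAR('L) ^ (degree f - degree g)))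
    (degree f - degree g)) g) = lead_monom f"
  using assms by (simp add: lead_monom_tmult tmult_monom_monom lead_monom_def[of g] lead_monom_def[of f])

lemma lead_monom_tmult_cancel_left:
  "f \<noteq> 0 \<Longrightarrow> lead_monom (tmult f g) = lead_monom (tmult f h) \<Longrightarrow> lead_monom g = lead_monom h"
  for f g h :: "'L poly"
  by (simp add: lead_monom_tmult tmult_left_cancel)

lemma teval_0_right [simp]: "teval f (0::'L) = 0"
  by (simp add: teval_def)

lemma teval_add_right: "teval f (x + y) = teval f x + teval f y"
  for x y :: 'L
  by (simp add: teval_def frobenius_add algebra_simps sum.distrib)

lemma teval_tmult: "teval (tmult f g) x = teval f (teval g x)"
  for x :: 'L
proof -
  define P where "P = (\<lambda>i. CHAR('L) ^ i)"
  define N where "N = degree f + degree g"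
  define G where "G = (\<lambda>i j. coeff f i * coeff g j ^ P i * x ^ P (i + j))"
  have "teval (tmult f g) x = (\<Sum>n\<le>N. coeff (tmult f g) n * x ^ P n)"
    unfolding P_def by (rule teval_eq_sum) (simp add: N_def degree_tmult_le)
  also have "\<dots> = (\<Sum>n\<le>N. \<Sum>i\<le>n. G i (n - i))"
    by (simp add: coeff_tmult sum_distrib_right G_def P_def)
  also have "\<dots> = (\<Sum>(i, j)\<in>{(i, j). i + j \<le> N}. G i j)"
    by (rule sum.triangle_reindex_eq[symmetric])
  also have "\<dots> = (\<Sum>(i, j)\<in>{..degree f} \<times> {..degree g}. G i j)"
  proof (rule sum.mono_neutral_right)
    show "finite {(i, j). i + j \<le> N}"
      by (rule finite_subset[of _ "{..N} \<times> {..N}"]) auto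
    show "{..degree f} \<times> {..degree g} \<subseteq> {(i, j). i + j \<le> N}"
      by (auto simp: N_def)
    show "\<forall>ij\<in>{(i, j). i + j \<le> N} - {..degree f} \<times> {..degree g}. (case ij of (i, j) \<Rightarrow> G i j) = 0"
      by (auto simp: G_def P_def intro: le_degree)
  qed
  also have "\<dots> = (\<Sum>i\<le>degree f. \<Sum>j\<le>degree g. G i j)"
    by (rule sum.cartesian_product[symmetric])
  also have "\<dots> = teval f (teval g x)"
    unfolding teval_def
  proof (rule sum.cong[OF refl])
    fix i
    have "(coeff g j * x ^ P j) ^ P i = coeff g j ^ P i * x ^ P (i + j)" for j
      by (simp add: P_def power_mult_distrib power_add mult.commute flip: power_mult)
    then show "(\<Sum>j\<le>degree g. G i j) =
        coeff f i * (\<Sum>j\<le>degree g. coeff g j * x ^ (CHAR('L) ^ j)) ^ (CHAR('L) ^ i)"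
      unfolding frobenius_sum by (simp add: G_def P_def sum_distrib_left mult.assoc)
  qed
  finally show ?thesis .
qed

text \<open>The coefficient of \<open>\<tau>\<^bsup>k + deg a\<^esup>\<close> in \<open>u a = a u\<close>, with the two terms involving \<open>u\<^sub>k\<close>
  moved to the left.\<close>

lemma coeff_commute_identity:
  fixes u a :: "'L poly"
  assumes "tmult u a = tmult a u"
  shows "lead_coeff a * coeff u k ^ (CHAR('L) ^ degree a) - lead_coeff a ^ (CHAR('L) ^ k) * coeff u k =
    (\<Sum>i\<in>{k<..k + degree a}. coeff u i * coeff a (k + degree a - i) ^ (CHAR('L) ^ i)) -
    (\<Sum>j<degree a. coeff a j * coeff u (k + degree a - j) ^ (CHAR('L) ^ j))"
proof -
  define m where "m = k + degree a"
  define P where "P = (\<lambda>i::nat. CHAR('L) ^ i)"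
  have "(\<Sum>i\<in>{..m} - {k}. coeff u i * coeff a (m - i) ^ P i) =
      (\<Sum>i\<in>{k<..m}. coeff u i * coeff a (m - i) ^ P i)"
  proof (rule sum.mono_neutral_right)
    show "\<forall>i\<in>{..m} - {k} - {k<..m}. coeff u i * coeff a (m - i) ^ P i = 0"
      by (auto simp: m_def P_def coeff_eq_0)
  qed auto
  then have left: "coeff (tmult u a) m =
      coeff u k * lead_coeff a ^ P k + (\<Sum>i\<in>{k<..m}. coeff u i * coeff a (m - i) ^ P i)"
    unfolding coeff_tmult by (subst sum.remove[of _ k]) (auto simp: m_def P_def)
  have "(\<Sum>j\<in>{..m} - {degree a}. coeff a j * coeff u (m - j) ^ P j) =
      (\<Sum>j<degree a. coeff a j * coeff u (m - j) ^ P j)"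
  proof (rule sum.mono_neutral_right)
    show "\<forall>j\<in>{..m} - {degree a} - {..<degree a}. coeff a j * coeff u (m - j) ^ P j = 0"
      by (auto simp: coeff_eq_0)
  qed (auto simp: m_def)
  then have right: "coeff (tmult a u) m =
      lead_coeff a * coeff u k ^ P (degree a) + (\<Sum>j<degree a. coeff a j * coeff u (m - j) ^ P j)"
    unfolding coeff_tmult by (subst sum.remove[of _ "degree a"]) (auto simp: m_def P_def)
  show ?thesis
    using left right assms by (simp add: m_def P_def algebra_simps)
qed

end

locale subfield =
  fixes K :: "'a::field set"
  assumes zero_mem [simp]: "0 \<in> K" and one_mem [simp]: "1 \<in> K"
    and add_mem: "x \<in> K \<Longrightarrow> y \<in> K \<Longrightarrow> x + y \<in> K"
    and mult_mem: "x \<in> K \<Longrightarrow> y \<in> K \<Longrightarrow> x * y \<in> K"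
    and uminus_mem: "x \<in> K \<Longrightarrow> - x \<in> K"
    and inverse_mem: "x \<in> K \<Longrightarrow> inverse x \<in> K"
begin

lemma diff_mem: "x \<in> K \<Longrightarrow> y \<in> K \<Longrightarrow> x - y \<in> K"
  using add_mem[of x "- y"] uminus_mem[of y] by simp

lemma divide_mem: "x \<in> K \<Longrightarrow> y \<in> K \<Longrightarrow> x / y \<in> K"
  using mult_mem[of x "inverse y"] inverse_mem[of y] by (simp add: divide_inverse)

lemma power_mem: "x \<in> K \<Longrightarrow> x ^ n \<in> K"
  by (induction n) (auto simp: mult_mem)

lemma sum_mem: "(\<And>i. i \<in> A \<Longrightarrow> f i \<in> K) \<Longrightarrow> sum f A \<in> K"
  by (induction A rule: infinite_finite_induct) (auto simp: add_mem)

lemma twisted_over_0 [simp]: "0 \<in> twisted_over K"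
  and twisted_over_1 [simp]: "1 \<in> twisted_over K"
  by (auto simp: twisted_over_def coeff_1)

lemma twisted_over_add: "f \<in> twisted_over K \<Longrightarrow> g \<in> twisted_over K \<Longrightarrow> f + g \<in> twisted_over K"
  by (auto simp: twisted_over_def add_mem)

lemma twisted_over_diff: "f \<in> twisted_over K \<Longrightarrow> g \<in> twisted_over K \<Longrightarrow> f - g \<in> twisted_over K"
  by (auto simp: twisted_over_def diff_mem)

lemma monom_in_twisted_over: "c \<in> K \<Longrightarrow> monom c n \<in> twisted_over K"
  by (auto simp: twisted_over_def coeff_monom)

lemma const_in_twisted_over: "c \<in> K \<Longrightarrow> [:c:] \<in> twisted_over K"
  by (auto simp: twisted_over_def coeff_pCons split: nat.split)

end

lemma subfield_field_gen: "subfield (field_gen S)"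
  by unfold_locales (auto intro: field_gen.intros)

locale twisted_subfield = prime_char char_type + subfield K
  for char_type :: "'L::field itself" and K :: "'L set"
begin

lemma tmult_in_twisted_over:
  "f \<in> twisted_over K \<Longrightarrow> g \<in> twisted_over K \<Longrightarrow> tmult f g \<in> twisted_over K"
  unfolding twisted_over_def by (auto simp: coeff_tmult intro!: sum_mem mult_mem power_mem)

lemma tmult_division:
  assumes g: "g \<in> twisted_over K" "g \<noteq> 0" and f: "f \<in> twisted_over K"
  obtains q r where "q \<in> twisted_over K" "r \<in> twisted_over K" "f = tmult q g + r"
    "r = 0 \<or> degree r < degree g"
  using f
proof (induction "degree f" arbitrary: f thesis rule: less_induct)
  case less
  show ?case
  proof (cases "f = 0 \<or> degree f < degree g")
    case True
    then show ?thesis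
      using less.prems by (intro less.prems(1)[of 0 f]) auto
  next
    case False
    define q0 where "q0 = monom (lead_coeff f / lead_coeff g ^ (CHAR('L) ^ (degree f - degree g)))
      (degree f - degree g)"
    have q0: "q0 \<in> twisted_over K"
      using g less.prems(2) by (auto simp: q0_def twisted_over_def
          intro!: monom_in_twisted_over divide_mem power_mem)
    define f1 where "f1 = f - tmult q0 g"
    have f1: "f1 \<in> twisted_over K"
      unfolding f1_def using less.prems(2) g q0 by (intro twisted_over_diff tmult_in_twisted_over)
    show ?thesis
    proof (cases "f1 = 0")
      case True
      then show ?thesis
        using q0 by (intro less.prems(1)[of q0 0]) (auto simp: f1_def)
    next
      case False
      have "lead_monom f = lead_monom (tmult q0 g)"
        using \<open>\<not> (f = 0 \<or> degree f < degree g)\<close> g(2) by (simp add: q0_def lead_monom_tmult_quotient)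
      then have "degree f1 < degree f"
        using False by (simp add: f1_def degree_diff_less_lead_monom)
      then obtain q r where qr: "q \<in> twisted_over K" "r \<in> twisted_over K" "f1 = tmult q g + r"
        "r = 0 \<or> degree r < degree g"
        using less.hyps f1 by blast
      have "f = tmult (q0 + q) g + r"
        using qr(3) by (simp add: f1_def tmult_add_left algebra_simps)
      then show ?thesis
        using qr q0 by (intro less.prems(1)[of "q0 + q" r]) (auto intro: twisted_over_add)
    qed
  qed
qed

text \<open>Euclid's algorithm for right division yields a least common left multiple \<open>A f = B g\<close>
  over \<open>K\<close>; its minimality is asserted against common left multiples with arbitrary coefficients.\<close>

lemma left_lcm_exists:
  "g \<in> twisted_over K \<Longrightarrow> g \<noteq> 0 \<Longrightarrow> f \<in> twisted_over K \<Longrightarrow> f \<noteq> 0 \<Longrightarrow>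
   \<exists>A B. A \<in> twisted_over K \<and> B \<in> twisted_over K \<and> A \<noteq> 0 \<and> tmult A f = tmult B g \<and>
     (\<forall>X Y. tmult X f = tmult Y g \<longrightarrow> (\<exists>Z. X = tmult Z A))"
proof (induction "degree g" arbitrary: f g rule: less_induct)
  case less
  obtain q r where qr: "q \<in> twisted_over K" "r \<in> twisted_over K" "f = tmult q g + r"
    "r = 0 \<or> degree r < degree g"
    using tmult_division[OF less.prems(1,2,3)] by blast
  show ?case
  proof (cases "r = 0")
    case True
    then show ?thesis
      using qr by (intro exI[of _ 1] exI[of _ q]) auto
  next
    case False
    with qr(4) have "degree r < degree g"
      by simp
    then obtain A B where AB: "A \<in> twisted_over K" "B \<in> twisted_over K" "A \<noteq> 0"
      "tmult A g = tmult B r" and univ: "\<forall>X Y. tmult X g = tmult Y r \<longrightarrow> (\<exists>Z. X = tmult Z A)"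
      using less.hyps qr(2) False less.prems(1,2) by blast
    have "B \<noteq> 0"
      using AB(3,4) less.prems(2) by auto
    have eq: "tmult B f = tmult (tmult B q + A) g"
      using AB(4) qr(3) by (simp add: tmult_add_right tmult_add_left tmult_assoc)
    show ?thesis
    proof (rule exI[of _ B], rule exI[of _ "tmult B q + A"], intro conjI allI impI)
      fix X Y
      assume XY: "tmult X f = tmult Y g"
      then have "tmult (Y - tmult X q) g = tmult X r"
        using qr(3) by (simp add: tmult_diff_left tmult_add_right tmult_assoc) (metis add_diff_cancel_left')
      then obtain Z where Z: "Y - tmult X q = tmult Z A"
        using univ by blast
      have "tmult X r = tmult (tmult Z B) r"
        using \<open>tmult (Y - tmult X q) g = tmult X r\<close> Z AB(4) by (simp add: tmult_assoc)
      then show "\<exists>Z. X = tmult Z B"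
        using False tmult_right_cancel by blast
    qed (use AB qr \<open>B \<noteq> 0\<close> eq in \<open>auto intro: twisted_over_add tmult_in_twisted_over\<close>)
  qed
qed

end

locale perfect_char = prime_char char_type
  for char_type :: "'L::field itself" +
  assumes perfect: "\<forall>a::'L. \<exists>y. y ^ CHAR('L) = a"
begin

lemma tau_left_factor:
  fixes F :: "'L poly"
  assumes "coeff F 0 = 0" "F \<noteq> 0"
  obtains G where "F = tmult (monom 1 1) G" "degree G < degree F"
proof -
  obtain root :: "'L \<Rightarrow> 'L" where root: "\<And>a. root a ^ CHAR('L) = a"
    using perfect by metis
  have root_0: "root 0 = 0"
    using root[of 0] frobenius_eq_0_iff[of _ 1] by simp
  define G where "G = Poly (map (\<lambda>i. root (coeff F (Suc i))) [0..<degree F])"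
  have coeff_G: "coeff G j = root (coeff F (Suc j))" for j
    by (cases "j < degree F") (auto simp: G_def nth_default_def coeff_eq_0 root_0)
  have "F = tmult (monom 1 1) G"
  proof (rule poly_eqI)
    fix n
    have "coeff (tmult (monom 1 1) G) n = (\<Sum>i\<le>n. if i = 1 then coeff G (n - 1) ^ CHAR('L) else 0)"
      unfolding coeff_tmult by (rule sum.cong) (auto simp: coeff_monom)
    also have "\<dots> = coeff F n"
      using assms(1) by (cases n) (auto simp: coeff_G root)
    finally show "coeff F n = coeff (tmult (monom 1 1) G) n" ..
  qed
  moreover have "degree G < degree F"
  proof -
    have "degree F > 0"
      using assms by (metis leading_coeff_0_iff neq0_conv)
    moreover have "degree G \<le> degree F - 1"
      by (rule degree_le) (auto simp: coeff_G coeff_eq_0 root_0)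
    ultimately show ?thesis
      by linarith
  qed
  ultimately show ?thesis
    using that by blast
qed

lemma common_left_multiple_coeff_0:
  fixes A B H1 H2 :: "'L poly"
  assumes H: "coeff H1 0 \<noteq> 0" "coeff H2 0 \<noteq> 0"
  shows "A \<noteq> 0 \<Longrightarrow> tmult A H1 = tmult B H2 \<Longrightarrow> \<exists>A' B'. coeff A' 0 \<noteq> 0 \<and> tmult A' H1 = tmult B' H2"
proof (induction "degree A" arbitrary: A B rule: less_induct)
  case less
  show ?case
  proof (cases "coeff A 0 = 0")
    case True
    have "B \<noteq> 0"
      using less.prems H by auto
    moreover have "coeff B 0 = 0"
      using arg_cong[OF less.prems(2), of "\<lambda>f. coeff f 0"] True H by (simp add: coeff_0_tmult)
    ultimately obtain B' where B': "B = tmult (monom 1 1) B'"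
      using tau_left_factor by metis
    obtain A' where A': "A = tmult (monom 1 1) A'" "degree A' < degree A"
      using tau_left_factor[OF True less.prems(1)] by metis
    have "A' \<noteq> 0"
      using A'(1) less.prems(1) by auto
    moreover have "tmult A' H1 = tmult B' H2"
      using less.prems(2) by (simp add: A'(1) B' tmult_assoc tmult_left_cancel)
    ultimately show ?thesis
      using less.hyps[OF A'(2)] by blast
  qed (use less.prems in blast)
qed

end

section \<open>Roots of separable additive polynomials\<close>

context twisted_subfield
begin

text \<open>A root of the additive polynomial \<open>\<Sum>i. H\<^sub>i X\<^bsup>p\<^sup>i\<^esup>\<close> attached to \<open>H \<in> K[\<tau>]\<close>; when \<open>H\<^sub>0 \<noteq> 0\<close>
  its derivative is the unit \<open>H\<^sub>0\<close>, so the polynomial is separable.\<close>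

definition sep_additive_root :: "'L \<Rightarrow> bool" where
  "sep_additive_root x \<longleftrightarrow> (\<exists>H \<in> twisted_over K. coeff H 0 \<noteq> 0 \<and> teval H x = 0)"

lemma sep_additive_root_in_sep_closure:
  assumes "sep_additive_root x"
  shows "x \<in> sep_closure K"
proof -
  obtain H where H: "H \<in> twisted_over K" "coeff H 0 \<noteq> 0" "teval H x = 0"
    using assms unfolding sep_additive_root_def by blast
  define P where "P = (\<lambda>i::nat. CHAR('L) ^ i)"
  define f where "f = (\<Sum>i\<le>degree H. monom (coeff H i) (P i))"
  have P_eq_1: "P i = Suc 0 \<longleftrightarrow> i = 0" for i
    using prime_char by (auto simp: P_def prime_gt_1_nat)
  have coeff_f: "coeff f n = (\<Sum>i\<le>degree H. if P i = n then coeff H i else 0)" for n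
    by (simp add: f_def coeff_sum coeff_monom)
  have "coeff f 1 = coeff H 0"
    unfolding coeff_f by (subst sum.cong[OF refl, of _ _ "\<lambda>i. if i = 0 then coeff H 0 else 0"])
      (auto simp: P_eq_1)
  then have "f \<noteq> 0"
    using H(2) by auto
  moreover have "\<forall>i. coeff f i \<in> K"
    using H(1) by (auto simp: coeff_f twisted_over_def intro!: sum_mem)
  moreover have "pderiv f = [:coeff H 0:]"
  proof -
    have "monom (of_nat (P i) * coeff H i) (P i - 1) = (if i = 0 then [:coeff H 0:] else 0)" for i
    proof (cases "i = 0")
      case False
      then have "(of_nat (P i) :: 'L) = 0"
        by (simp add: P_def of_nat_eq_0_iff_char_dvd)
      then show ?thesis
        using False by simp
    qed (simp add: P_def monom_0)
    moreover have "pderiv (sum g A) = (\<Sum>i\<in>A. pderiv (g i))" for g :: "nat \<Rightarrow> 'L poly" and A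
      using higher_pderiv_sum[of 1] by simp
    ultimately show ?thesis
      by (simp add: f_def pderiv_monom)
  qed
  then have "coprime f (pderiv f)"
    using H(2) by (intro is_unit_right_imp_coprime) (simp add: is_unit_const_poly_iff dvd_field_iff)
  moreover have "poly f x = 0"
    using H(3) by (simp add: f_def poly_sum poly_monom teval_def P_def)
  ultimately show ?thesis
    unfolding sep_closure_def by blast
qed

lemma sep_additive_root_0 [simp]: "sep_additive_root 0"
  unfolding sep_additive_root_def by (intro bexI[of _ 1]) auto

lemma sep_additive_root_mult:
  assumes "c \<in> K" "sep_additive_root x"
  shows "sep_additive_root (c * x)"
proof (cases "c = 0")
  case False
  obtain H where H: "H \<in> twisted_over K" "coeff H 0 \<noteq> 0" "teval H x = 0"
    using assms(2) unfolding sep_additive_root_def by blast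
  define H' where "H' = tmult H [:inverse c:]"
  have "H' \<in> twisted_over K"
    unfolding H'_def using H(1) assms(1) by (intro tmult_in_twisted_over const_in_twisted_over inverse_mem)
  moreover have "coeff H' 0 \<noteq> 0"
    using H(2) False by (simp add: H'_def coeff_0_tmult)
  moreover have "teval H' (c * x) = 0"
    using H(3) False by (simp add: H'_def teval_tmult teval_const flip: mult.assoc)
  ultimately show ?thesis
    unfolding sep_additive_root_def by blast
qed simp

lemma sep_additive_root_frobenius:
  assumes "sep_additive_root x"
  shows "sep_additive_root (x ^ (CHAR('L) ^ j))"
proof -
  obtain H where H: "H \<in> twisted_over K" "coeff H 0 \<noteq> 0" "teval H x = 0"
    using assms unfolding sep_additive_root_def by blast
  define H' where "H' = map_poly (\<lambda>a. a ^ (CHAR('L) ^ j)) H"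
  have coeff_H': "coeff H' i = coeff H i ^ (CHAR('L) ^ j)" for i
    unfolding H'_def by (rule coeff_map_poly) simp
  have "H' \<in> twisted_over K"
    using H(1) by (auto simp: twisted_over_def coeff_H' power_mem)
  moreover have "coeff H' 0 \<noteq> 0"
    using H(2) by (simp add: coeff_H')
  moreover have "teval H' (x ^ (CHAR('L) ^ j)) = 0"
  proof -
    have "degree H' \<le> degree H"
      by (rule degree_le) (simp add: coeff_H' coeff_eq_0)
    then have "teval H' (x ^ (CHAR('L) ^ j)) =
        (\<Sum>i\<le>degree H. (coeff H i * x ^ (CHAR('L) ^ i)) ^ (CHAR('L) ^ j))"
      by (simp add: teval_eq_sum coeff_H' power_mult_distrib mult.commute flip: power_mult)
    also have "\<dots> = (teval H x) ^ (CHAR('L) ^ j)"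
      unfolding teval_def by (rule frobenius_sum[symmetric])
    finally show ?thesis
      using H(3) by simp
  qed
  ultimately show ?thesis
    unfolding sep_additive_root_def by blast
qed

lemma sep_additive_root_of_teval:
  assumes "G \<in> twisted_over K" "coeff G 0 \<noteq> 0" "sep_additive_root (teval G x)"
  shows "sep_additive_root x"
proof -
  obtain H where H: "H \<in> twisted_over K" "coeff H 0 \<noteq> 0" "teval H (teval G x) = 0"
    using assms(3) unfolding sep_additive_root_def by blast
  have "tmult H G \<in> twisted_over K"
    using H(1) assms(1) by (rule tmult_in_twisted_over)
  moreover have "coeff (tmult H G) 0 \<noteq> 0"
    using H(2) assms(2) by (simp add: coeff_0_tmult)
  moreover have "teval (tmult H G) x = 0"
    using H(3) by (simp add: teval_tmult)
  ultimately show ?thesis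
    unfolding sep_additive_root_def by blast
qed

end

locale perfect_twisted_subfield = perfect_char char_type + twisted_subfield char_type K
  for char_type :: "'L::field itself" and K :: "'L set"
begin

lemma sep_left_common_multiple:
  assumes H1: "H1 \<in> twisted_over K" "coeff H1 0 \<noteq> 0"
    and H2: "H2 \<in> twisted_over K" "coeff H2 0 \<noteq> 0"
  obtains A B where "A \<in> twisted_over K" "B \<in> twisted_over K" "tmult A H1 = tmult B H2"
    "coeff A 0 \<noteq> 0"
proof -
  have "H1 \<noteq> 0" "H2 \<noteq> 0"
    using H1 H2 by auto
  then obtain A B where AB: "A \<in> twisted_over K" "B \<in> twisted_over K" "A \<noteq> 0" "tmult A H1 = tmult B H2"
    and univ: "\<forall>X Y. tmult X H1 = tmult Y H2 \<longrightarrow> (\<exists>Z. X = tmult Z A)"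
    using left_lcm_exists H1(1) H2(1) by metis
  obtain A' B' where "coeff A' 0 \<noteq> 0" "tmult A' H1 = tmult B' H2"
    using common_left_multiple_coeff_0[OF H1(2) H2(2) AB(3,4)] by blast
  then have "coeff A 0 \<noteq> 0"
    using univ by (auto simp: coeff_0_tmult)
  then show ?thesis
    using AB that by blast
qed

lemma sep_additive_root_add:
  assumes "sep_additive_root x" "sep_additive_root y"
  shows "sep_additive_root (x + y)"
proof -
  obtain H1 H2 where H1: "H1 \<in> twisted_over K" "coeff H1 0 \<noteq> 0" "teval H1 x = 0"
    and H2: "H2 \<in> twisted_over K" "coeff H2 0 \<noteq> 0" "teval H2 y = 0"
    using assms unfolding sep_additive_root_def by blast
  obtain A B where AB: "A \<in> twisted_over K" "B \<in> twisted_over K" "tmult A H1 = tmult B H2"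
    "coeff A 0 \<noteq> 0"
    using sep_left_common_multiple[OF H1(1,2) H2(1,2)] by blast
  have "tmult A H1 \<in> twisted_over K"
    using AB(1) H1(1) by (rule tmult_in_twisted_over)
  moreover have "coeff (tmult A H1) 0 \<noteq> 0"
    using AB(4) H1(2) by (simp add: coeff_0_tmult)
  moreover have "teval (tmult A H1) (x + y) = 0"
  proof -
    have "teval (tmult A H1) (x + y) = teval (tmult A H1) x + teval (tmult B H2) y"
      by (simp add: teval_add_right AB(3))
    then show ?thesis
      using H1(3) H2(3) by (simp add: teval_tmult)
  qed
  ultimately show ?thesis
    unfolding sep_additive_root_def by blast
qed

lemma sep_additive_root_diff:
  "sep_additive_root x \<Longrightarrow> sep_additive_root y \<Longrightarrow> sep_additive_root (x - y)"
  using sep_additive_root_add[of x "- y"] sep_additive_root_mult[of "- 1" y]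
  by (simp add: uminus_mem)

lemma sep_additive_root_sum:
  "(\<And>i. i \<in> A \<Longrightarrow> sep_additive_root (f i)) \<Longrightarrow> sep_additive_root (sum f A)"
  by (induction A rule: infinite_finite_induct) (auto simp: sep_additive_root_add)

lemma coeff_sep_additive_root_if_commute:
  assumes a: "a \<in> twisted_over K" "degree a > 0" and comm: "tmult u a = tmult a u"
  shows "sep_additive_root (coeff u k)"
proof (induction "degree u - k" arbitrary: k rule: less_induct)
  case less
  have higher: "sep_additive_root (coeff u i)" if "k < i" for i
  proof (cases "i \<le> degree u")
    case True
    then show ?thesis
      using less.hyps that by simp
  qed (simp add: coeff_eq_0)
  define G where "G = monom (lead_coeff a) (degree a) - [:lead_coeff a ^ (CHAR('L) ^ k):]"
  have "G \<in> twisted_over K"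
    unfolding G_def using a(1)
    by (intro twisted_over_diff monom_in_twisted_over const_in_twisted_over power_mem)
      (auto simp: twisted_over_def)
  moreover have "coeff G 0 \<noteq> 0"
    using a by (auto simp: G_def coeff_monom)
  moreover have "sep_additive_root (teval G (coeff u k))"
    unfolding G_def teval_diff teval_monom teval_const coeff_commute_identity[OF comm]
  proof (intro sep_additive_root_diff sep_additive_root_sum)
    fix i assume "i \<in> {k<..k + degree a}"
    then show "sep_additive_root (coeff u i * coeff a (k + degree a - i) ^ CHAR('L) ^ i)"
      using higher a(1) by (subst mult.commute)
        (auto simp: twisted_over_def intro!: sep_additive_root_mult power_mem)
  next
    fix j assume "j \<in> {..<degree a}"
    then show "sep_additive_root (coeff a j * coeff u (k + degree a - j) ^ CHAR('L) ^ j)"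
      using higher a(1) by (auto simp: twisted_over_def intro!: sep_additive_root_mult sep_additive_root_frobenius)
  qed
  ultimately show ?case
    by (rule sep_additive_root_of_teval)
qed

end

section \<open>Endomorphisms of a Drinfeld module\<close>

lemma power_in_ring_gen: "x \<in> ring_gen S \<Longrightarrow> x ^ n \<in> ring_gen S"
  by (induction n) (auto intro: ring_gen.intros)

lemma finite_index_obtain_diff:
  fixes g :: "nat \<Rightarrow> 'b::ab_group_add"
  assumes "finite_index M E" "0 \<in> M" "range g \<subseteq> E"
  obtains i j where "i < j" "g j - g i \<in> M"
proof -
  define C where "C x = (\<lambda>m. x + m) ` M" for x
  have "finite (C ` E)"
    using assms(1) by (simp add: finite_index_def C_def)
  then have "\<not> inj (C \<circ> g)"
    using assms(3) by (metis finite_imageD finite_subset image_comp image_mono infinite_UNIV_nat)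
  then obtain i j where "i \<noteq> j" "C (g i) = C (g j)"
    unfolding inj_def by auto
  moreover have "g b - g a \<in> M" if "C (g a) = C (g b)" for a b
  proof -
    have "g b \<in> C (g a)"
      using that assms(2) by (force simp: C_def)
    then show ?thesis
      by (auto simp: C_def)
  qed
  ultimately show ?thesis
    using that by (metis linorder_neqE_nat)
qed

lemma alg_closed_ex_power_eq:
  assumes "alg_closed TYPE('L::field)" "n > 0"
  shows "\<exists>y::'L. y ^ n = a"
proof -
  have "degree (monom 1 n + [:- a:]) = n"
    using assms(2) by (subst degree_add_eq_left) (auto simp: degree_monom_eq)
  then obtain y where "poly (monom 1 n + [:- a:]) y = 0"
    using assms unfolding alg_closed_def by (metis neq0_conv)
  then show ?thesis
    by (auto simp: poly_monom)
qed

locale perfect_drinfeld_module = perfect_twisted_subfield char_type K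
  for char_type :: "'L::field itself" and K :: "'L set" +
  fixes \<phi> :: "'a::comm_ring_1 \<Rightarrow> 'L poly"
  assumes drinfeld: "drinfeld_module K \<phi>"
begin

lemma phi_in_twisted_over: "\<phi> a \<in> twisted_over K"
  and phi_1 [simp]: "\<phi> 1 = 1"
  and phi_add: "\<phi> (a + b) = \<phi> a + \<phi> b"
  and phi_mult: "\<phi> (a * b) = tmult (\<phi> a) (\<phi> b)"
  using drinfeld by (simp_all add: drinfeld_module_def)

lemma phi_0 [simp]: "\<phi> 0 = 0"
  using phi_add[of 0 0] by (metis add_cancel_right_right add.right_neutral)

lemma phi_uminus: "\<phi> (- a) = - \<phi> a"
  using phi_add[of a "- a"] by (metis phi_0 add.right_inverse add.inverse_unique)

lemma phi_commute: "tmult (\<phi> a) (\<phi> b) = tmult (\<phi> b) (\<phi> a)"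
  by (metis phi_mult mult.commute)

lemma phi_power_add: "\<phi> (b ^ (i + j)) = tmult (\<phi> (b ^ i)) (\<phi> (b ^ j))"
  by (simp add: power_add phi_mult)

lemma phi_power_nonzero: "\<phi> b \<noteq> 0 \<Longrightarrow> \<phi> (b ^ n) \<noteq> 0"
  by (induction n) (simp_all add: phi_mult)

lemma degree_phi_power: "\<phi> b \<noteq> 0 \<Longrightarrow> degree (\<phi> (b ^ n)) = n * degree (\<phi> b)"
  by (induction n) (simp_all add: phi_mult degree_tmult phi_power_nonzero)

text \<open>Commuting with a single \<open>\<phi>\<^sub>b\<close> of positive degree already forces the coefficients to be
  separable over \<open>K\<close>; this is what makes \<open>End_sep K \<phi>\<close> closed under the ring operations.\<close>

lemma End_sep_iff: "u \<in> End_sep K \<phi> \<longleftrightarrow> (\<forall>a. tmult u (\<phi> a) = tmult (\<phi> a) u)"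
proof
  assume comm: "\<forall>a. tmult u (\<phi> a) = tmult (\<phi> a) u"
  obtain b where "degree (\<phi> b) > 0"
    using drinfeld unfolding drinfeld_module_def by blast
  then have "coeff u i \<in> sep_closure K" for i
    using comm phi_in_twisted_over
    by (blast intro: sep_additive_root_in_sep_closure coeff_sep_additive_root_if_commute)
  then show "u \<in> End_sep K \<phi>"
    using comm by (simp add: End_sep_def twisted_over_def)
qed (simp add: End_sep_def)

lemma zero_in_End_sep [simp]: "0 \<in> End_sep K \<phi>"
  by (simp add: End_sep_iff)

lemma End_sep_add: "u \<in> End_sep K \<phi> \<Longrightarrow> v \<in> End_sep K \<phi> \<Longrightarrow> u + v \<in> End_sep K \<phi>"
  by (simp add: End_sep_iff tmult_add_left tmult_add_right)

lemma End_sep_diff: "u \<in> End_sep K \<phi> \<Longrightarrow> v \<in> End_sep K \<phi> \<Longrightarrow> u - v \<in> End_sep K \<phi>"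
  by (simp add: End_sep_iff tmult_diff_left tmult_diff_right)

lemma phi_in_End_sep: "\<phi> a \<in> End_sep K \<phi>"
  by (simp add: End_sep_iff phi_commute)

lemma phi_tmult_in_End_sep: "u \<in> End_sep K \<phi> \<Longrightarrow> tmult (\<phi> a) u \<in> End_sep K \<phi>"
  unfolding End_sep_iff by (metis tmult_assoc phi_commute)

lemma M_deg_subset_End_sep: "M_deg K \<phi> t d \<subseteq> End_sep K \<phi>"
proof
  fix m assume "m \<in> M_deg K \<phi> t d"
  then show "m \<in> End_sep K \<phi>"
    unfolding M_deg_def
    by (induction rule: Fpt_span.induct) (auto intro: End_sep_add phi_tmult_in_End_sep)
qed

lemma degree_phi_ring_gen:
  assumes "degree (\<phi> t) = 0" "a \<in> ring_gen {t}"
  shows "degree (\<phi> a) = 0"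
  using assms(2)
proof (induction rule: ring_gen.induct)
  case (rg_add x y)
  then show ?case
    using degree_add_le_max[of "\<phi> x" "\<phi> y"] by (simp add: phi_add)
next
  case (rg_mult x y)
  then show ?case
    using degree_tmult_le[of "\<phi> x" "\<phi> y"] by (simp add: phi_mult)
qed (auto simp: phi_uminus assms(1))

lemma degree_M_deg_le:
  assumes "degree (\<phi> t) = 0" "m \<in> M_deg K \<phi> t d"
  shows "degree m \<le> nat (max d 0)"
  using assms(2) unfolding M_deg_def
proof (induction rule: Fpt_span.induct)
  case (sp_add u v)
  then show ?case
    using degree_add_le_max[of u v] by simp
next
  case (sp_smult a u)
  then show ?case
    using degree_tmult_le[of "\<phi> a" u] degree_phi_ring_gen[OF assms(1)] by simp
qed auto

text \<open>If \<open>\<phi>\<^sub>t\<close> were constant, \<open>M\<^sub>d\<close> would consist of elements of degree at most \<open>d\<close>, while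
  the powers of some \<open>\<phi>\<^sub>b\<close> of positive degree give infinitely many cosets.\<close>

lemma degree_phi_pos_if_finite_index:
  assumes "finite_index (M_deg K \<phi> t d) (End_sep K \<phi>)"
  shows "degree (\<phi> t) > 0"
proof (rule ccontr)
  assume "\<not> degree (\<phi> t) > 0"
  then have M_bound: "degree m \<le> nat (max d 0)" if "m \<in> M_deg K \<phi> t d" for m
    using degree_M_deg_le that by simp
  obtain b where b: "degree (\<phi> b) > 0"
    using drinfeld unfolding drinfeld_module_def by blast
  define g where "g j = \<phi> (b ^ (Suc (nat (max d 0)) + j))" for j
  have degree_g: "degree (g j) = (Suc (nat (max d 0)) + j) * degree (\<phi> b)" for j
    unfolding g_def using b by (intro degree_phi_power) auto
  have "0 \<in> M_deg K \<phi> t d"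
    by (simp add: M_deg_def sp_zero)
  moreover have "range g \<subseteq> End_sep K \<phi>"
    by (auto simp: g_def phi_in_End_sep)
  ultimately obtain i j where "i < j" "g j - g i \<in> M_deg K \<phi> t d"
    using finite_index_obtain_diff[OF assms] by blast
  moreover have "degree (g j - g i) = degree (g j)"
    using \<open>i < j\<close> b by (intro degree_diff_eq_left) (simp add: degree_g)
  moreover have "degree (g j) > nat (max d 0)"
  proof -
    have "Suc (nat (max d 0)) + j \<le> (Suc (nat (max d 0)) + j) * degree (\<phi> b)"
      using b mult_le_mono2[of 1 "degree (\<phi> b)" "Suc (nat (max d 0)) + j"] by simp
    then show ?thesis
      by (simp add: degree_g)
  qed
  ultimately show False
    using M_bound by fastforce
qed

end

section \<open>Leading monomials of \<open>M\<^sub>d\<close>\<close>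

context perfect_drinfeld_module
begin

context
  fixes t :: 'a and d :: int
begin

definition End_deg_le :: "'L poly set" where
  "End_deg_le = {v \<in> End_sep K \<phi>. v = 0 \<or> int (degree v) \<le> d}"

definition t_expansions :: "'L poly set" where
  "t_expansions = {\<Sum>j\<in>S. tmult (\<phi> (t ^ j)) (w j) | S w. finite S \<and> (\<forall>j\<in>S. w j \<in> End_deg_le)}"

lemma End_deg_le_add:
  assumes "u \<in> End_deg_le" "v \<in> End_deg_le"
  shows "u + v \<in> End_deg_le"
proof (cases "u = 0 \<or> v = 0")
  case False
  then have "int (degree u) \<le> d" "int (degree v) \<le> d"
    using assms by (auto simp: End_deg_le_def)
  then have "int (degree (u + v)) \<le> d"
    using degree_add_le_max[of u v] by (simp add: max_def split: if_splits)
  then show ?thesis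
    using assms by (auto simp: End_deg_le_def End_sep_add)
qed (use assms in auto)

lemma End_deg_le_subset_M_deg: "End_deg_le \<subseteq> M_deg K \<phi> t d"
  by (auto simp: End_deg_le_def M_deg_def intro: sp_zero sp_base)

lemma t_expansions_zero: "0 \<in> t_expansions"
  unfolding t_expansions_def by (rule CollectI, rule exI[of _ "{}"]) auto

lemma End_deg_le_subset_t_expansions: "End_deg_le \<subseteq> t_expansions"
proof
  fix v assume "v \<in> End_deg_le"
  then show "v \<in> t_expansions"
    unfolding t_expansions_def by (intro CollectI exI[of _ "{0}"] exI[of _ "\<lambda>_. v"]) auto
qed

lemma t_expansions_add:
  assumes "x \<in> t_expansions" "y \<in> t_expansions"
  shows "x + y \<in> t_expansions"
proof -
  obtain S1 w1 S2 w2 where S1: "finite S1" "\<forall>j\<in>S1. w1 j \<in> End_deg_le" "x = (\<Sum>j\<in>S1. tmult (\<phi> (t ^ j)) (w1 j))"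
    and S2: "finite S2" "\<forall>j\<in>S2. w2 j \<in> End_deg_le" "y = (\<Sum>j\<in>S2. tmult (\<phi> (t ^ j)) (w2 j))"
    using assms unfolding t_expansions_def by blast
  define w where "w j = (if j \<in> S1 then w1 j else 0) + (if j \<in> S2 then w2 j else 0)" for j
  have "\<forall>j\<in>S1 \<union> S2. w j \<in> End_deg_le"
    using S1(2) S2(2) by (auto simp: w_def intro: End_deg_le_add)
  moreover have "(\<Sum>j\<in>S1 \<union> S2. tmult (\<phi> (t ^ j)) (w j)) =
      (\<Sum>j\<in>S1 \<union> S2. if j \<in> S1 then tmult (\<phi> (t ^ j)) (w1 j) else 0) +
      (\<Sum>j\<in>S1 \<union> S2. if j \<in> S2 then tmult (\<phi> (t ^ j)) (w2 j) else 0)"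
    unfolding sum.distrib[symmetric] by (rule sum.cong) (auto simp: w_def tmult_add_right)
  then have "x + y = (\<Sum>j\<in>S1 \<union> S2. tmult (\<phi> (t ^ j)) (w j))"
    using S1 S2 by (simp add: sum.inter_restrict[symmetric] Int_absorb1 Int_absorb2)
  ultimately show ?thesis
    unfolding t_expansions_def using S1(1) S2(1) by blast
qed

lemma End_deg_le_uminus: "u \<in> End_deg_le \<Longrightarrow> - u \<in> End_deg_le"
  using End_sep_diff[of 0 u] by (auto simp: End_deg_le_def)

lemma t_expansions_uminus:
  assumes "x \<in> t_expansions"
  shows "- x \<in> t_expansions"
proof -
  obtain S w where S: "finite S" "\<forall>j\<in>S. w j \<in> End_deg_le" "x = (\<Sum>j\<in>S. tmult (\<phi> (t ^ j)) (w j))"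
    using assms unfolding t_expansions_def by blast
  then have "- x = (\<Sum>j\<in>S. tmult (\<phi> (t ^ j)) (- w j))"
    by (simp add: tmult_minus_right sum_negf)
  then show ?thesis
    unfolding t_expansions_def using S(1,2) by (auto intro!: exI[of _ S] End_deg_le_uminus)
qed

lemma phi_t_tmult_t_expansions:
  assumes "x \<in> t_expansions"
  shows "tmult (\<phi> t) x \<in> t_expansions"
proof -
  obtain S w where S: "finite S" "\<forall>j\<in>S. w j \<in> End_deg_le" "x = (\<Sum>j\<in>S. tmult (\<phi> (t ^ j)) (w j))"
    using assms unfolding t_expansions_def by blast
  have "tmult (\<phi> t) x = (\<Sum>j\<in>S. tmult (\<phi> (t ^ Suc j)) (w j))"
    by (simp add: S(3) tmult_sum_right phi_mult flip: tmult_assoc)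
  also have "\<dots> = (\<Sum>j\<in>Suc ` S. tmult (\<phi> (t ^ j)) (w (j - 1)))"
    by (simp add: sum.reindex)
  finally show ?thesis
    unfolding t_expansions_def using S(1,2) by (auto intro!: exI[of _ "Suc ` S"])
qed

lemma phi_tmult_t_expansions:
  "a \<in> ring_gen {t} \<Longrightarrow> x \<in> t_expansions \<Longrightarrow> tmult (\<phi> a) x \<in> t_expansions"
proof (induction arbitrary: x rule: ring_gen.induct)
  case (rg_add a b)
  then show ?case
    by (simp add: phi_add tmult_add_left t_expansions_add)
next
  case (rg_uminus a)
  then show ?case
    by (simp add: phi_uminus tmult_minus_left t_expansions_uminus)
next
  case (rg_mult a b)
  then show ?case
    by (simp add: phi_mult tmult_assoc)
qed (auto simp: t_expansions_zero phi_t_tmult_t_expansions)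

lemma M_deg_subset_t_expansions: "M_deg K \<phi> t d \<subseteq> t_expansions"
proof
  fix m assume "m \<in> M_deg K \<phi> t d"
  then show "m \<in> t_expansions"
    unfolding M_deg_def
  proof (induction rule: Fpt_span.induct)
    case (sp_base u)
    then show ?case
      using End_deg_le_subset_t_expansions by (auto simp: End_deg_le_def)
  qed (auto simp: t_expansions_zero t_expansions_add phi_tmult_t_expansions)
qed

lemma merge_equal_degree_terms:
  assumes "\<phi> t \<noteq> 0" "u \<in> End_deg_le" "v \<in> End_deg_le" "u \<noteq> 0" "v \<noteq> 0" "i \<le> k"
    and deg: "degree (tmult (\<phi> (t ^ i)) u) = degree (tmult (\<phi> (t ^ k)) v)"
  shows "u + tmult (\<phi> (t ^ (k - i))) v \<in> End_deg_le"
    and "tmult (\<phi> (t ^ i)) u + tmult (\<phi> (t ^ k)) v = tmult (\<phi> (t ^ i)) (u + tmult (\<phi> (t ^ (k - i))) v)"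
proof -
  have "i * degree (\<phi> t) + degree u = k * degree (\<phi> t) + degree v"
    using deg assms(1,4,5) by (simp add: degree_tmult phi_power_nonzero degree_phi_power)
  then have "degree (tmult (\<phi> (t ^ (k - i))) v) = degree u"
    using assms(1,5,6) by (simp add: degree_tmult phi_power_nonzero degree_phi_power diff_mult_distrib)
  then have "tmult (\<phi> (t ^ (k - i))) v \<in> End_deg_le"
    using assms(2,3) by (auto simp: End_deg_le_def phi_tmult_in_End_sep)
  then show "u + tmult (\<phi> (t ^ (k - i))) v \<in> End_deg_le"
    by (rule End_deg_le_add[OF assms(2)])
  have "\<phi> (t ^ k) = tmult (\<phi> (t ^ i)) (\<phi> (t ^ (k - i)))"
    using assms(6) phi_power_add[of t i "k - i"] by simp
  then show "tmult (\<phi> (t ^ i)) u + tmult (\<phi> (t ^ k)) v = tmult (\<phi> (t ^ i)) (u + tmult (\<phi> (t ^ (k - i))) v)"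
    by (simp add: tmult_add_right tmult_assoc)
qed

lemma t_expansion_shrink:
  assumes "\<phi> t \<noteq> 0" "finite S" "\<forall>j\<in>S. w j \<in> End_deg_le" "i \<in> S" "k \<in> S" "i < k"
    and deg: "degree (tmult (\<phi> (t ^ i)) (w i)) = degree (tmult (\<phi> (t ^ k)) (w k))"
  obtains k' w' where "k' \<in> S" "\<forall>j\<in>S - {k'}. w' j \<in> End_deg_le"
    "(\<Sum>j\<in>S - {k'}. tmult (\<phi> (t ^ j)) (w' j)) = (\<Sum>j\<in>S. tmult (\<phi> (t ^ j)) (w j))"
proof -
  let ?T = "\<lambda>w j. tmult (\<phi> (t ^ j)) (w j)"
  have drop: "sum (?T w) (S - {j}) = sum (?T w) S" if "j \<in> S" "w j = 0" for j
    using that assms(2) by (simp add: sum.remove[of S j])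
  consider "w i = 0" | "w k = 0" | "w i \<noteq> 0" "w k \<noteq> 0"
    by blast
  then show ?thesis
  proof cases
    case 1
    show ?thesis
      by (rule that[of i w]) (use 1 drop assms(3,4) in auto)
  next
    case 2
    show ?thesis
      by (rule that[of k w]) (use 2 drop assms(3,5) in auto)
  next
    case 3
    define w' where "w' = w(i := w i + tmult (\<phi> (t ^ (k - i))) (w k))"
    have merge: "w' i \<in> End_deg_le" "?T w i + ?T w k = ?T w' i"
      using merge_equal_degree_terms[OF assms(1), of "w i" "w k" i k] assms(3-6) deg 3
      by (simp_all add: w'_def)
    have "sum (?T w') (S - {k}) = ?T w' i + sum (?T w') (S - {k} - {i})"
      using assms(2,4,6) by (simp add: sum.remove[of "S - {k}" i])
    also have "sum (?T w') (S - {k} - {i}) = sum (?T w) (S - {k} - {i})"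
      by (rule sum.cong) (auto simp: w'_def)
    also have "?T w' i + sum (?T w) (S - {k} - {i}) = sum (?T w) S"
      using assms(2,4-6) by (simp add: sum.remove[of S k] sum.remove[of "S - {k}" i] add_ac flip: merge(2))
    finally show ?thesis
      using that[of k w'] assms(3,5) merge(1) by (auto simp: w'_def)
  qed
qed

text \<open>Terms of equal degree are merged, one index at a time, until the degrees of the terms are
  pairwise distinct; then the term of largest degree carries the leading monomial.\<close>

lemma lead_monom_t_expansion:
  assumes "\<phi> t \<noteq> 0"
  shows "finite S \<Longrightarrow> \<forall>j\<in>S. w j \<in> End_deg_le \<Longrightarrow> (\<Sum>j\<in>S. tmult (\<phi> (t ^ j)) (w j)) \<noteq> 0 \<Longrightarrow>
    \<exists>j v. v \<in> End_deg_le \<and> lead_monom (\<Sum>j\<in>S. tmult (\<phi> (t ^ j)) (w j)) = lead_monom (tmult (\<phi> (t ^ j)) v)"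
proof (induction "card S" arbitrary: S w rule: less_induct)
  case less
  let ?T = "\<lambda>w j. tmult (\<phi> (t ^ j)) (w j)"
  show ?case
  proof (cases "inj_on (\<lambda>j. degree (?T w j)) S")
    case True
    note inj = this
    have "S \<noteq> {}"
      using less.prems(3) by auto
    then obtain i where i: "i \<in> S" "lead_monom (sum (?T w) S) = lead_monom (?T w i)"
      by (rule lead_monom_sum_inj_degree[OF less.prems(1) _ inj])
    show ?thesis
      using less.prems(2) i by (intro exI[of _ i] exI[of _ "w i"]) simp
  next
    case False
    then obtain a b where ab: "a \<in> S" "b \<in> S" "a \<noteq> b" "degree (?T w a) = degree (?T w b)"
      unfolding inj_on_def by blast
    obtain i k where ik: "i \<in> S" "k \<in> S" "i < k" "degree (?T w i) = degree (?T w k)"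
    proof (cases "a < b")
      case True
      then show ?thesis
        using ab by (intro that[of a b]) auto
    next
      case False
      then show ?thesis
        using ab by (intro that[of b a]) auto
    qed
    obtain k' w' where k': "k' \<in> S" "\<forall>j\<in>S - {k'}. w' j \<in> End_deg_le"
      "sum (?T w') (S - {k'}) = sum (?T w) S"
      by (rule t_expansion_shrink[OF assms less.prems(1,2) ik])
    then show ?thesis
      using less.hyps[of "S - {k'}" w', OF card_Diff1_less[OF less.prems(1) k'(1)]] less.prems(1,3)
      by simp
  qed
qed

lemma lead_monom_M_deg:
  assumes "\<phi> t \<noteq> 0" "m \<in> M_deg K \<phi> t d" "m \<noteq> 0"
  obtains j v where "v \<in> End_deg_le" "lead_monom m = lead_monom (tmult (\<phi> (t ^ j)) v)"
proof -
  obtain S w where S: "finite S" "\<forall>j\<in>S. w j \<in> End_deg_le" "m = (\<Sum>j\<in>S. tmult (\<phi> (t ^ j)) (w j))"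
    using assms(2) M_deg_subset_t_expansions unfolding t_expansions_def by blast
  then show ?thesis
    using lead_monom_t_expansion[OF assms(1) S(1,2)] assms(3) that by auto
qed

lemma phi_power_tmult_diff_notin_M_deg:
  assumes pos: "degree (\<phi> t) > 0" and u: "u \<in> End_sep K \<phi>" "u \<notin> End_deg_le"
    and unmatched: "\<And>j v. v \<in> End_deg_le \<Longrightarrow> lead_monom u \<noteq> lead_monom (tmult (\<phi> (t ^ j)) v)"
    and "i < j"
  shows "tmult (\<phi> (t ^ j)) u - tmult (\<phi> (t ^ i)) u \<notin> M_deg K \<phi> t d"
proof
  let ?P = "\<lambda>n. \<phi> (t ^ n)"
  assume in_M: "tmult (?P j) u - tmult (?P i) u \<in> M_deg K \<phi> t d"
  have nz: "\<phi> t \<noteq> 0" "u \<noteq> 0" and "d < int (degree u)"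
    using pos u by (auto simp: End_deg_le_def)
  have degree_P: "degree (tmult (?P n) v) = n * degree (\<phi> t) + degree v" if "v \<noteq> 0" for n v
    using that nz(1) by (simp add: degree_tmult phi_power_nonzero degree_phi_power)
  have lm: "lead_monom (tmult (?P j) u - tmult (?P i) u) = lead_monom (tmult (?P j) u)"
    using \<open>i < j\<close> pos nz(2) by (intro lead_monom_diff_eq_left) (simp add: degree_P)
  have "tmult (?P j) u \<noteq> 0"
    using nz by (simp add: phi_power_nonzero)
  then have "tmult (?P j) u - tmult (?P i) u \<noteq> 0"
    using lm by force
  then obtain j' v where v: "v \<in> End_deg_le" "lead_monom (tmult (?P j) u) = lead_monom (tmult (?P j') v)"
    unfolding lm[symmetric] by (rule lead_monom_M_deg[OF nz(1) in_M])
  have "v \<noteq> 0"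
    using v(2) \<open>tmult (?P j) u \<noteq> 0\<close> by force
  have "degree (tmult (?P j) u) = degree (tmult (?P j') v)"
    using v(2) \<open>tmult (?P j) u \<noteq> 0\<close> lead_monom_eq_iff by blast
  then have "j * degree (\<phi> t) + degree u = j' * degree (\<phi> t) + degree v"
    using nz(2) \<open>v \<noteq> 0\<close> by (simp add: degree_P)
  moreover have "int (degree v) \<le> d"
    using v(1) \<open>v \<noteq> 0\<close> by (simp add: End_deg_le_def)
  ultimately have "j * degree (\<phi> t) < j' * degree (\<phi> t)"
    using \<open>d < int (degree u)\<close> by linarith
  then have "?P j' = tmult (?P j) (?P (j' - j))"
    using phi_power_add[of t j "j' - j"] by simp
  then have "lead_monom (tmult (?P j) u) = lead_monom (tmult (?P j) (tmult (?P (j' - j)) v))"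
    using v(2) by (simp add: tmult_assoc)
  then have "lead_monom u = lead_monom (tmult (?P (j' - j)) v)"
    by (rule lead_monom_tmult_cancel_left[OF phi_power_nonzero[OF nz(1)]])
  then show False
    using unmatched v(1) by blast
qed

lemma M_deg_if_lead_monom_matched:
  assumes u: "u \<in> End_sep K \<phi>" and v: "v \<in> End_deg_le"
    and lm: "lead_monom u = lead_monom (tmult (\<phi> (t ^ j)) v)"
    and lower: "\<And>w. w \<in> End_sep K \<phi> \<Longrightarrow> degree w < degree u \<Longrightarrow> w \<in> M_deg K \<phi> t d"
  shows "u \<in> M_deg K \<phi> t d"
proof -
  define X where "X = tmult (\<phi> (t ^ j)) v"
  have X: "X \<in> M_deg K \<phi> t d"
    unfolding X_def M_deg_def using End_deg_le_subset_M_deg v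
    by (intro sp_smult power_in_ring_gen rg_base) (auto simp: M_deg_def)
  have "u - X \<in> M_deg K \<phi> t d"
  proof (cases "u = X")
    case False
    then have "degree (u - X) < degree u"
      using lm by (intro degree_diff_less_lead_monom) (simp_all add: X_def)
    moreover have "u - X \<in> End_sep K \<phi>"
      using u X M_deg_subset_End_sep by (blast intro: End_sep_diff)
    ultimately show ?thesis
      by (rule lower[rotated])
  qed (simp add: M_deg_def sp_zero)
  then have "(u - X) + X \<in> M_deg K \<phi> t d"
    using X unfolding M_deg_def by (rule sp_add)
  then show ?thesis
    by simp
qed

lemma End_sep_subset_M_deg:
  assumes pos: "degree (\<phi> t) > 0" and fin: "finite_index (M_deg K \<phi> t d) (End_sep K \<phi>)"
  shows "End_sep K \<phi> \<subseteq> M_deg K \<phi> t d"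
proof
  fix u assume "u \<in> End_sep K \<phi>"
  then show "u \<in> M_deg K \<phi> t d"
  proof (induction "degree u" arbitrary: u rule: less_induct)
    case less
    consider "u \<in> End_deg_le"
      | j v where "v \<in> End_deg_le" "lead_monom u = lead_monom (tmult (\<phi> (t ^ j)) v)"
      | "u \<notin> End_deg_le" "\<And>j v. v \<in> End_deg_le \<Longrightarrow> lead_monom u \<noteq> lead_monom (tmult (\<phi> (t ^ j)) v)"
      by blast
    then show ?case
    proof cases
      case 1
      then show ?thesis
        using End_deg_le_subset_M_deg by blast
    next
      case 2
      show ?thesis
        by (rule M_deg_if_lead_monom_matched[OF less.prems 2]) (use less.hyps in blast)
    next
      case 3
      have "0 \<in> M_deg K \<phi> t d"
        by (simp add: M_deg_def sp_zero)
      moreover have "range (\<lambda>n. tmult (\<phi> (t ^ n)) u) \<subseteq> End_sep K \<phi>"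
        using less.prems by (auto intro: phi_tmult_in_End_sep)
      ultimately obtain i j where "i < j" "tmult (\<phi> (t ^ j)) u - tmult (\<phi> (t ^ i)) u \<in> M_deg K \<phi> t d"
        using finite_index_obtain_diff[OF fin] by blast
      then show ?thesis
        using phi_power_tmult_diff_notin_M_deg[OF pos less.prems 3] by blast
    qed
  qed
qed

end

end

theorem proposition5p10:
  fixes K :: "'L::field set" and \<phi> :: "'a::idom \<Rightarrow> 'L poly" and t :: 'a and d :: int and p :: nat
  assumes "admissible_coeff_ring TYPE('a) p"
    and "CHAR('L) = p"
    and "alg_closed TYPE('L)"
    and "fin_gen_field K"
    and "drinfeld_module K \<phi>"
    and "\<not> constant_elem t"
    and "finite_index (M_deg K \<phi> t d) (End_sep K \<phi>)"
  shows "M_deg K \<phi> t d = End_sep K \<phi>"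
proof -
  have "prime CHAR('L)"
    using assms(1,2) by (simp add: admissible_coeff_ring_def)
  moreover have "subfield K"
    using assms(4) subfield_field_gen by (auto simp: fin_gen_field_def)
  ultimately interpret perfect_drinfeld_module "TYPE('L)" K \<phi>
    using assms(3,5) alg_closed_ex_power_eq[OF assms(3)]
    by unfold_locales (auto simp: subfield_def prime_gt_0_nat)
  have "degree (\<phi> t) > 0"
    using degree_phi_pos_if_finite_index[OF assms(7)] .
  then show ?thesis
    using End_sep_subset_M_deg[OF _ assms(7)] M_deg_subset_End_sep by blast
qed

end
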